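(* Let $\mathbb{K}$ be a field of characteristic zero and let $\mathcal{D}=\{\Delta^{p(1)}_{\beta(1)},\ldots,\Delta^{p(k)}_{\beta(k)}\}$ be a finite set of derivations of $\mathbb{K}[x_1,\ldots,x_n]$ with $p(i)\in\mathbb{Z}^n_{\ge0}\setminus\{0\}$ (positive weight) and $\beta(i)\in\mathbb{K}^n\setminus\{0\}$. Let $\Gamma(\mathcal{D})$ be the directed graph with vertices $1,\ldots,k$ in which there is an edge from $i$ to $j$ if and only if $\beta(i)$ and $\beta(j)$ are not proportional and $\langle\beta(i),p(j)\rangle\neq0$. If the Lie algebra $\mathfrak{g}(\mathcal{D})$ generated by $\mathcal{D}$ is finite dimensional, then $\Gamma(\mathcal{D})$ contains no oriented cycles.
   Context: For $p\in\mathbb{Z}^n_{\ge0}$ and $\beta\in\mathbb{K}^n$, $\Delta^p_\beta:=x_1^{p_1}\cdots x_n^{p_n}\sum_{j=1}^n\beta_jx_j\partial_j$, where $\partial_j=\partial/\partial x_j$; its weight is $\sum_jp_j$. $\langle\beta,u\rangle:=\sum_i\beta_iu_i$. The Lie bracket is the commutator of derivations. *)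

theory Defs
  imports Main "HOL-Library.Poly_Mapping"
begin

text \<open>Polynomials in the variables x_v (v ranging over a finite type 'n, so n = CARD('n))
  with coefficients in 'k: maps from exponent vectors (monomials) to coefficients.\<close>
type_synonym ('n, 'k) mpoly = "('n \<Rightarrow>\<^sub>0 nat) \<Rightarrow>\<^sub>0 'k"

definition pdiff :: "'n \<Rightarrow> ('n, 'k::comm_semiring_1) mpoly \<Rightarrow> ('n, 'k) mpoly" where
  "pdiff j f = (\<Sum>m\<in>Poly_Mapping.keys f. Poly_Mapping.single (m - Poly_Mapping.single j 1) (of_nat (Poly_Mapping.lookup (m::'n \<Rightarrow>\<^sub>0 nat) j) * Poly_Mapping.lookup f m))"

definition var :: "'n \<Rightarrow> ('n, 'k::comm_semiring_1) mpoly" where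
  "var j = Poly_Mapping.single (Poly_Mapping.single j 1) 1"

definition xpow :: "('n::finite \<Rightarrow> nat) \<Rightarrow> ('n, 'k::comm_semiring_1) mpoly" where
  "xpow p = Poly_Mapping.single (Abs_poly_mapping p) 1"

definition const :: "'k::comm_semiring_1 \<Rightarrow> ('n, 'k) mpoly" where
  "const c = Poly_Mapping.single 0 c"

definition Delta :: "('n::finite \<Rightarrow> nat) \<Rightarrow> ('n \<Rightarrow> 'k::comm_semiring_1)
    \<Rightarrow> ('n, 'k) mpoly \<Rightarrow> ('n, 'k) mpoly" where
  "Delta p \<beta> f = xpow p * (\<Sum>j\<in>UNIV. const (\<beta> j) * (var j * pdiff j f))"

definition pair :: "('n::finite \<Rightarrow> 'k::comm_semiring_1) \<Rightarrow> ('n \<Rightarrow> nat) \<Rightarrow> 'k" where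
  "pair \<beta> u = (\<Sum>j\<in>UNIV. \<beta> j * of_nat (u j))"

definition lie_bracket :: "(('n, 'k::comm_ring_1) mpoly \<Rightarrow> ('n, 'k) mpoly)
   \<Rightarrow> (('n, 'k) mpoly \<Rightarrow> ('n, 'k) mpoly) \<Rightarrow> ('n, 'k) mpoly \<Rightarrow> ('n, 'k) mpoly" where
  "lie_bracket D E = (\<lambda>f. D (E f) - E (D f))"

definition op_scale :: "'k::comm_ring_1 \<Rightarrow> (('n, 'k) mpoly \<Rightarrow> ('n, 'k) mpoly)
   \<Rightarrow> ('n, 'k) mpoly \<Rightarrow> ('n, 'k) mpoly" where
  "op_scale c D = (\<lambda>f. const c * D f)"

inductive_set lie_gen :: "(('n, 'k::comm_ring_1) mpoly \<Rightarrow> ('n, 'k) mpoly) set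
     \<Rightarrow> (('n, 'k) mpoly \<Rightarrow> ('n, 'k) mpoly) set" for S where
  gen: "D \<in> S \<Longrightarrow> D \<in> lie_gen S"
| zero: "(\<lambda>f. 0) \<in> lie_gen S"
| add: "D \<in> lie_gen S \<Longrightarrow> E \<in> lie_gen S \<Longrightarrow> (\<lambda>f. D f + E f) \<in> lie_gen S"
| scale: "D \<in> lie_gen S \<Longrightarrow> op_scale c D \<in> lie_gen S"
| bracket: "D \<in> lie_gen S \<Longrightarrow> E \<in> lie_gen S \<Longrightarrow> lie_bracket D E \<in> lie_gen S"

definition fin_dim_ops :: "(('n, 'k::comm_ring_1) mpoly \<Rightarrow> ('n, 'k) mpoly) set \<Rightarrow> bool" where
  "fin_dim_ops L \<longleftrightarrow> (\<exists>B. finite B \<and>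
      (\<forall>D\<in>L. \<exists>c. D = (\<lambda>f. \<Sum>b\<in>B. const (c b) * b f)))"

definition proportional :: "('n \<Rightarrow> 'k::field) \<Rightarrow> ('n \<Rightarrow> 'k) \<Rightarrow> bool" where
  "proportional u v \<longleftrightarrow> (\<exists>a b. (a \<noteq> 0 \<or> b \<noteq> 0) \<and> (\<forall>j. a * u j + b * v j = 0))"

text \<open>Edges of Gamma(D) on vertices {0..<k}.\<close>
definition Gamma_edges :: "nat \<Rightarrow> (nat \<Rightarrow> 'n::finite \<Rightarrow> nat) \<Rightarrow> (nat \<Rightarrow> 'n \<Rightarrow> 'k::field)
    \<Rightarrow> (nat \<times> nat) set" where
  "Gamma_edges k p \<beta> = {(i, j). i < k \<and> j < k \<and> \<not> proportional (\<beta> i) (\<beta> j)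
       \<and> pair (\<beta> i) (p j) \<noteq> 0}"

end

theory Submission
  imports Defs
begin

text \<open>
  The bracket of two derivations of the form \<Delta>^P_\<delta> is again of this form:
  [\<Delta>^P_\<delta>, \<Delta>^Q_\<epsilon>] = \<Delta>^(P+Q)_\<eta> with
  \<eta> = \<langle>\<delta>,Q\<rangle>\<epsilon> - \<langle>\<epsilon>,P\<rangle>\<delta>.
  Since \<Delta>^P_\<delta> x_j = \<delta>_j x^P x_j, a finite-dimensional Lie algebra contains
  \<Delta>^P_\<delta> with \<delta> \<noteq> 0 for only finitely many degrees P.
  Extend \<Gamma> to all pairs (P, \<delta>) with \<Delta>^P_\<delta> in the Lie algebra.

  A 2-cycle between (p, \<beta>) and (q, \<gamma>) is impossible: the iterated brackets of \<Delta>^p_\<beta>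
  with \<Delta>^q_\<gamma> live in the degrees q + s p, so \<langle>\<beta>,q\<rangle> = -s \<langle>\<beta>,p\<rangle>
  for some s \<ge> 1, and symmetrically \<langle>\<gamma>,p\<rangle> = -t \<langle>\<gamma>,q\<rangle>.
  After normalising \<langle>\<beta>,p\<rangle> = \<langle>\<gamma>,q\<rangle> = 1, bracketing alternately with the two
  generators keeps one coefficient of \<beta>, \<gamma> nonpositive and the other positive, so
  these brackets are nonzero in all degrees k p + (k + 1) q.

  A longer cycle x \<rightarrow> y \<rightarrow> \<dots> \<rightarrow> w \<rightarrow> x is shortened: if there is no edge y \<rightarrow> x, then
  \<langle>\<delta>_y,P_x\<rangle> = 0, so the bracket of x and y is a multiple of
  (P_x + P_y, \<delta>_y), which has the same out-edges as y, and w points to it or to y.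
\<close>

lemma poly_mapping_single_induct [case_names zero single add]:
  assumes "P 0"
    and "\<And>m c. P (Poly_Mapping.single m c)"
    and "\<And>f g. P f \<Longrightarrow> P g \<Longrightarrow> P (f + g)"
  shows "P f"
proof (induction f rule: update_induct)
  case const
  then show ?case using assms(1) .
next
  case (update f a b)
  have "Poly_Mapping.update a b f = f + Poly_Mapping.single a b"
    by (rule poly_mapping_eqI)
      (use update(1) in \<open>auto simp: lookup_update lookup_add lookup_single in_keys_iff when_def\<close>)
  then show ?case using assms(2,3) update by simp
qed

lemma pdiff_single:
  "pdiff j (Poly_Mapping.single m c) =
     Poly_Mapping.single (m - Poly_Mapping.single j 1) (of_nat (Poly_Mapping.lookup m j) * c)"
  by (cases "c = 0") (simp_all add: pdiff_def)

lemma pdiff_add: "pdiff j (f + g) = pdiff j f + pdiff j g"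
  unfolding pdiff_def
  by (rule setsum_keys_plus_distrib) (simp_all add: single_add distrib_left)

lemma var_mult_pdiff_single:
  "var j * pdiff j (Poly_Mapping.single m c) =
     Poly_Mapping.single m (of_nat (Poly_Mapping.lookup m j) * c)"
proof (cases "Poly_Mapping.lookup m j = 0")
  case True
  then show ?thesis by (simp add: pdiff_single)
next
  case False
  then have "Poly_Mapping.single j 1 + (m - Poly_Mapping.single j 1) = m"
    by (intro poly_mapping_eqI) (auto simp: lookup_add lookup_minus lookup_single when_def)
  then show ?thesis by (simp add: pdiff_single var_def mult_single)
qed

lemma const_mult_single: "const c * Poly_Mapping.single m x = Poly_Mapping.single m (c * x)"
  by (simp add: const_def mult_single)

lemma Delta_single:
  "Delta P \<delta> (Poly_Mapping.single m c) =
     Poly_Mapping.single (Abs_poly_mapping P + m) (pair \<delta> (Poly_Mapping.lookup m) * c)"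
proof -
  have "(\<Sum>j\<in>UNIV. const (\<delta> j) * (var j * pdiff j (Poly_Mapping.single m c)))
      = (\<Sum>j\<in>UNIV. Poly_Mapping.single m (\<delta> j * of_nat (Poly_Mapping.lookup m j) * c))"
    by (simp add: var_mult_pdiff_single const_mult_single mult.assoc)
  also have "\<dots> = Poly_Mapping.single m (\<Sum>j\<in>UNIV. \<delta> j * of_nat (Poly_Mapping.lookup m j) * c)"
    by (rule sum_comp_morphism[unfolded o_def]) (simp_all add: single_add)
  also have "\<dots> = Poly_Mapping.single m (pair \<delta> (Poly_Mapping.lookup m) * c)"
    by (simp add: pair_def sum_distrib_right)
  finally show ?thesis by (simp add: Delta_def xpow_def mult_single)
qed

lemma Delta_add: "Delta P \<delta> (f + g) = Delta P \<delta> f + Delta P \<delta> g"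
  by (simp add: Delta_def pdiff_add distrib_left sum.distrib)

lemma Delta_zero: "Delta P \<delta> 0 = 0"
  using Delta_single[of P \<delta> 0 0] by simp

lemma pair_add_degree: "pair \<delta> (\<lambda>j. P j + Q j) = pair \<delta> P + pair \<delta> Q"
  by (simp add: pair_def distrib_left sum.distrib)

lemma pair_zero_degree: "pair \<delta> (\<lambda>_. 0) = 0"
  by (simp add: pair_def)

lemma pair_scale: "pair (\<lambda>j. c * \<delta> j) P = c * pair \<delta> P"
  by (simp add: pair_def sum_distrib_left mult.assoc)

lemma pair_degree_lincomb:
  "pair \<delta> (\<lambda>j. a * P j + b * Q j) = of_nat a * pair \<delta> P + of_nat b * pair \<delta> Q"
  by (simp add: pair_def distrib_left sum.distrib sum_distrib_left algebra_simps)

lemma pair_lincomb: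
  "pair (\<lambda>j. x * \<delta> j + y * \<epsilon> j) P = x * pair \<delta> P + y * pair \<epsilon> P"
  by (simp add: pair_def distrib_right sum.distrib sum_distrib_left mult.assoc)

lemma pair_diff_lincomb:
  "pair (\<lambda>j. x * \<delta> j - y * \<epsilon> j) P = x * pair \<delta> P - y * pair \<epsilon> P"
  for \<delta> \<epsilon> :: "'n::finite \<Rightarrow> 'k::comm_ring_1"
  by (simp add: pair_def sum_subtractf sum_distrib_left algebra_simps)

lemma lie_bracket_Delta:
  fixes P :: "'n::finite \<Rightarrow> nat"
  shows "lie_bracket (Delta P \<delta>) (Delta Q \<epsilon>) =
     Delta (\<lambda>j. P j + Q j) (\<lambda>j. pair \<delta> Q * \<epsilon> j - pair \<epsilon> P * (\<delta> j :: 'k::comm_ring_1))"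
proof
  fix f :: "('n, 'k) mpoly"
  show "lie_bracket (Delta P \<delta>) (Delta Q \<epsilon>) f =
      Delta (\<lambda>j. P j + Q j) (\<lambda>j. pair \<delta> Q * \<epsilon> j - pair \<epsilon> P * \<delta> j) f"
  proof (induction f rule: poly_mapping_single_induct)
    case zero
    show ?case by (simp add: lie_bracket_def Delta_zero)
  next
    case (single m c)
    have degree: "Abs_poly_mapping Q + (Abs_poly_mapping P + m) = Abs_poly_mapping (\<lambda>j. P j + Q j) + m"
      "Abs_poly_mapping P + (Abs_poly_mapping Q + m) = Abs_poly_mapping (\<lambda>j. P j + Q j) + m"
      by (simp_all add: poly_mapping_eqI lookup_add)
    have lookup_shift: "Poly_Mapping.lookup (Abs_poly_mapping R + m) = (\<lambda>j. R j + Poly_Mapping.lookup m j)"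
      for R :: "'n \<Rightarrow> nat"
      by (simp add: lookup_add fun_eq_iff)
    have "pair \<delta> (\<lambda>j. Q j + Poly_Mapping.lookup m j) * (pair \<epsilon> (Poly_Mapping.lookup m) * c)
        - pair \<epsilon> (\<lambda>j. P j + Poly_Mapping.lookup m j) * (pair \<delta> (Poly_Mapping.lookup m) * c)
      = pair (\<lambda>j. pair \<delta> Q * \<epsilon> j - pair \<epsilon> P * \<delta> j) (Poly_Mapping.lookup m) * c"
      unfolding pair_diff_lincomb pair_add_degree by (simp add: algebra_simps)
    then show ?case
      by (simp add: lie_bracket_def Delta_single lookup_shift degree single_diff[symmetric])
  next
    case (add f g)
    then show ?case by (simp add: lie_bracket_def Delta_add algebra_simps)
  qed
qed

lemma op_scale_Delta:
  fixes P :: "'n::finite \<Rightarrow> nat"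
  shows "op_scale c (Delta P \<delta>) = Delta P (\<lambda>j. c * (\<delta> j :: 'k::comm_ring_1))"
proof
  fix f :: "('n, 'k) mpoly"
  show "op_scale c (Delta P \<delta>) f = Delta P (\<lambda>j. c * \<delta> j) f"
  proof (induction f rule: poly_mapping_single_induct)
    case zero
    show ?case by (simp add: op_scale_def Delta_zero)
  next
    case (single m x)
    show ?case
      by (simp add: op_scale_def Delta_single const_mult_single pair_scale mult.assoc)
  next
    case (add f g)
    then show ?case by (simp add: op_scale_def Delta_add distrib_left)
  qed
qed

lemma keys_const_mult: "Poly_Mapping.keys (const c * g) \<subseteq> Poly_Mapping.keys g"
  using keys_mult[of "const c" g] unfolding const_def by (cases "c = 0") auto

lemma fin_dim_ops_finite_keys:
  assumes "fin_dim_ops L"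
  shows "finite (\<Union>D\<in>L. Poly_Mapping.keys (D f))"
proof -
  obtain B where "finite B" and span: "\<forall>D\<in>L. \<exists>c. D = (\<lambda>f. \<Sum>b\<in>B. const (c b) * b f)"
    using assms unfolding fin_dim_ops_def by blast
  have "Poly_Mapping.keys (D f) \<subseteq> (\<Union>b\<in>B. Poly_Mapping.keys (b f))" if "D \<in> L" for D
  proof -
    obtain c where "D = (\<lambda>f. \<Sum>b\<in>B. const (c b) * b f)"
      using span \<open>D \<in> L\<close> by blast
    then have "Poly_Mapping.keys (D f) \<subseteq> (\<Union>b\<in>B. Poly_Mapping.keys (const (c b) * b f))"
      by (simp add: keys_sum)
    then show ?thesis
      using keys_const_mult by blast
  qed
  then have "(\<Union>D\<in>L. Poly_Mapping.keys (D f)) \<subseteq> (\<Union>b\<in>B. Poly_Mapping.keys (b f))"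
    by blast
  then show ?thesis
    by (rule finite_subset) (simp add: \<open>finite B\<close>)
qed

lemma Delta_var:
  "Delta P \<delta> (var j) = Poly_Mapping.single (Abs_poly_mapping P + Poly_Mapping.single j 1) (\<delta> j)"
proof -
  have "pair \<delta> (Poly_Mapping.lookup (Poly_Mapping.single j 1)) = \<delta> j"
    by (simp add: pair_def lookup_single when_def if_distrib cong: if_cong)
  then show ?thesis by (simp add: var_def Delta_single)
qed

lemma finite_Delta_degrees:
  assumes "fin_dim_ops L"
  shows "finite {P. \<exists>\<delta>. \<delta> \<noteq> (\<lambda>_. 0) \<and> Delta P \<delta> \<in> L}"
proof (rule finite_subset)
  let ?K = "\<lambda>j. \<Union>D\<in>L. Poly_Mapping.keys (D (var j))"
  show "{P. \<exists>\<delta>. \<delta> \<noteq> (\<lambda>_. 0) \<and> Delta P \<delta> \<in> L}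
      \<subseteq> (\<Union>j. (\<lambda>m. Poly_Mapping.lookup (m - Poly_Mapping.single j 1)) ` ?K j)"
  proof
    fix P
    assume "P \<in> {P. \<exists>\<delta>. \<delta> \<noteq> (\<lambda>_. 0) \<and> Delta P \<delta> \<in> L}"
    then obtain \<delta> where "\<delta> \<noteq> (\<lambda>_. 0)" and "Delta P \<delta> \<in> L" by blast
    obtain j where "\<delta> j \<noteq> 0" using \<open>\<delta> \<noteq> (\<lambda>_. 0)\<close> by auto
    then have "Abs_poly_mapping P + Poly_Mapping.single j 1 \<in> Poly_Mapping.keys (Delta P \<delta> (var j))"
      by (simp add: Delta_var)
    then have "Abs_poly_mapping P + Poly_Mapping.single j 1 \<in> ?K j"
      using \<open>Delta P \<delta> \<in> L\<close> by blast
    moreover have "P = Poly_Mapping.lookup ((Abs_poly_mapping P + Poly_Mapping.single j 1) - Poly_Mapping.single j 1)"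
      by simp
    ultimately show "P \<in> (\<Union>j. (\<lambda>m. Poly_Mapping.lookup (m - Poly_Mapping.single j 1)) ` ?K j)"
      by blast
  qed
  show "finite (\<Union>j. (\<lambda>m. Poly_Mapping.lookup (m - Poly_Mapping.single j 1)) ` ?K j)"
    by (intro finite_UN_I finite_imageI fin_dim_ops_finite_keys[OF assms] finite_UNIV)
qed

lemma fin_dim_no_Delta_ray:
  assumes "fin_dim_ops L" and "R \<noteq> (\<lambda>_. 0)"
    and ray: "\<And>s::nat. \<exists>\<delta>. \<delta> \<noteq> (\<lambda>_. 0) \<and> Delta (\<lambda>j. Q j + s * R j) \<delta> \<in> L"
  shows False
proof -
  obtain j where "R j \<noteq> 0" using \<open>R \<noteq> (\<lambda>_. 0)\<close> by auto
  have "inj (\<lambda>s::nat. \<lambda>j. Q j + s * R j)"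
  proof
    fix a b :: nat
    assume "(\<lambda>j. Q j + a * R j) = (\<lambda>j. Q j + b * R j)"
    then have "a * R j = b * R j" by (metis add_left_cancel)
    then show "a = b" using \<open>R j \<noteq> 0\<close> by simp
  qed
  then have "infinite (range (\<lambda>s::nat. \<lambda>j. Q j + s * R j))"
    using finite_imageD by blast
  moreover have "range (\<lambda>s::nat. \<lambda>j. Q j + s * R j) \<subseteq> {P. \<exists>\<delta>. \<delta> \<noteq> (\<lambda>_. 0) \<and> Delta P \<delta> \<in> L}"
    using ray by blast
  ultimately show False
    using finite_Delta_degrees[OF assms(1)] finite_subset by blast
qed

lemma Delta_bracket_in_lie_gen:
  assumes "Delta P \<delta> \<in> lie_gen S" and "Delta Q \<epsilon> \<in> lie_gen S"
  shows "Delta (\<lambda>j. P j + Q j) (\<lambda>j. pair \<delta> Q * \<epsilon> j - pair \<epsilon> P * \<delta> j) \<in> lie_gen S"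
  using lie_gen.bracket[OF assms] by (simp add: lie_bracket_Delta)

lemma Delta_scale_in_lie_gen:
  assumes "Delta P \<delta> \<in> lie_gen S"
  shows "Delta P (\<lambda>j. c * \<delta> j) \<in> lie_gen S"
  using lie_gen.scale[OF assms] by (simp add: op_scale_Delta)

lemma proportional_commute: "proportional u v \<longleftrightarrow> proportional v u"
  unfolding proportional_def by (metis add.commute)

lemma lincomb_nonzero_if_not_proportional:
  assumes "\<not> proportional u v" and "x \<noteq> 0 \<or> y \<noteq> 0"
  shows "(\<lambda>j. x * u j + y * v j) \<noteq> (\<lambda>_. 0)"
  using assms unfolding proportional_def fun_eq_iff by blast

lemma nonzero_if_not_proportional:
  assumes "\<not> proportional u v"
  shows "v \<noteq> (\<lambda>_. 0)"
  using lincomb_nonzero_if_not_proportional[OF assms, of 0 1] by simp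

lemma not_proportional_if_pair:
  assumes "pair \<delta> P \<noteq> 0" and "pair \<epsilon> P = 0" and "\<epsilon> \<noteq> (\<lambda>_. 0)"
  shows "\<not> proportional \<delta> \<epsilon>"
proof
  assume "proportional \<delta> \<epsilon>"
  then obtain a b where "a \<noteq> 0 \<or> b \<noteq> 0" and dep: "(\<lambda>j. a * \<delta> j + b * \<epsilon> j) = (\<lambda>_. 0)"
    unfolding proportional_def by auto
  have "a * pair \<delta> P + b * pair \<epsilon> P = pair (\<lambda>j. a * \<delta> j + b * \<epsilon> j) P"
    by (rule pair_lincomb[symmetric])
  also have "\<dots> = 0"
    unfolding dep by (simp add: pair_def)
  finally have "a * pair \<delta> P = 0"
    using \<open>pair \<epsilon> P = 0\<close> by simp
  with assms(1) have "a = 0" by simp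
  with dep \<open>a \<noteq> 0 \<or> b \<noteq> 0\<close> have "\<epsilon> = (\<lambda>_. 0)" by (simp add: fun_eq_iff)
  with assms(3) show False ..
qed

lemma Delta_ad_power_in_lie_gen:
  assumes A: "Delta p \<beta> \<in> lie_gen S" and B: "Delta q \<gamma> \<in> lie_gen S"
  shows "\<exists>d. Delta (\<lambda>j. q j + s * p j)
      (\<lambda>j. (\<Prod>i<s. pair \<beta> q + of_nat i * pair \<beta> p) * \<gamma> j + d * \<beta> j) \<in> lie_gen S"
proof (induction s)
  case 0
  show ?case using B by (intro exI[of _ 0]) simp
next
  case (Suc s)
  let ?c = "\<Prod>i<s. pair \<beta> q + of_nat i * pair \<beta> p"
  obtain d where "Delta (\<lambda>j. q j + s * p j) (\<lambda>j. ?c * \<gamma> j + d * \<beta> j) \<in> lie_gen S"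
    using Suc.IH by blast
  from Delta_bracket_in_lie_gen[OF A this]
  have "Delta (\<lambda>j. p j + (q j + s * p j))
      (\<lambda>j. pair \<beta> (\<lambda>j. 1 * q j + s * p j) * (?c * \<gamma> j + d * \<beta> j)
        - pair (\<lambda>j. ?c * \<gamma> j + d * \<beta> j) p * \<beta> j) \<in> lie_gen S"
    by simp
  also have "(\<lambda>j. p j + (q j + s * p j)) = (\<lambda>j. q j + Suc s * p j)"
    by auto
  also have "(\<lambda>j. pair \<beta> (\<lambda>j. 1 * q j + s * p j) * (?c * \<gamma> j + d * \<beta> j)
        - pair (\<lambda>j. ?c * \<gamma> j + d * \<beta> j) p * \<beta> j)
      = (\<lambda>j. (\<Prod>i<Suc s. pair \<beta> q + of_nat i * pair \<beta> p) * \<gamma> j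
        + ((pair \<beta> q + of_nat s * pair \<beta> p) * d - pair (\<lambda>j. ?c * \<gamma> j + d * \<beta> j) p) * \<beta> j)"
    unfolding pair_degree_lincomb by (simp add: algebra_simps)
  finally show ?case
    by blast
qed

lemma Delta_chain_root:
  fixes \<beta> \<gamma> :: "'n::finite \<Rightarrow> 'k::field"
  assumes fin: "fin_dim_ops (lie_gen S)"
    and A: "Delta p \<beta> \<in> lie_gen S" and B: "Delta q \<gamma> \<in> lie_gen S"
    and "p \<noteq> (\<lambda>_. 0)" and "\<not> proportional \<beta> \<gamma>"
  obtains s :: nat where "pair \<beta> q + of_nat s * pair \<beta> p = 0"
proof (rule ccontr)
  assume no_root: "\<not> thesis"
  show False
  proof (rule fin_dim_no_Delta_ray[OF fin \<open>p \<noteq> (\<lambda>_. 0)\<close>])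
    fix s :: nat
    let ?c = "\<Prod>i<s. pair \<beta> q + of_nat i * pair \<beta> p"
    obtain d where "Delta (\<lambda>j. q j + s * p j) (\<lambda>j. ?c * \<gamma> j + d * \<beta> j) \<in> lie_gen S"
      using Delta_ad_power_in_lie_gen[OF A B] by blast
    moreover have "(\<lambda>j. ?c * \<gamma> j + d * \<beta> j) \<noteq> (\<lambda>_. 0)"
    proof (rule lincomb_nonzero_if_not_proportional)
      show "\<not> proportional \<gamma> \<beta>"
        using \<open>\<not> proportional \<beta> \<gamma>\<close> by (simp add: proportional_commute)
      show "?c \<noteq> 0 \<or> d \<noteq> 0"
        using no_root that by auto
    qed
    ultimately show "\<exists>\<delta>. \<delta> \<noteq> (\<lambda>_. 0) \<and> Delta (\<lambda>j. q j + s * p j) \<delta> \<in> lie_gen S"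
      by blast
  qed
qed

lemma Delta_bracket_sign_pattern:
  fixes \<beta> \<gamma> :: "'n::finite \<Rightarrow> 'k::field_char_0" and u v c :: int
  assumes A: "Delta p \<beta> \<in> lie_gen S"
    and X: "Delta P (\<lambda>j. of_int u * \<beta> j + of_int v * \<gamma> j) \<in> lie_gen S"
    and "pair \<beta> p = 1" and "pair \<gamma> p = - of_nat m" and "m \<ge> 1"
    and "pair \<beta> P = of_int c" and "c \<le> 0"
    and "u \<le> 0" and "0 < v"
  shows "\<exists>u' v'. u' \<le> 0 \<and> 0 < v' \<and>
    Delta (\<lambda>j. p j + P j) (\<lambda>j. of_int u' * \<gamma> j + of_int v' * \<beta> j) \<in> lie_gen S"
proof (intro exI conjI)
  show "c * v \<le> 0"
    using \<open>c \<le> 0\<close> \<open>0 < v\<close> by (simp add: mult_nonpos_nonneg)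
  have "0 \<le> (c - 1) * u"
    using \<open>c \<le> 0\<close> \<open>u \<le> 0\<close> by (simp add: mult_nonpos_nonpos)
  moreover have "0 < int m * v"
    using \<open>m \<ge> 1\<close> \<open>0 < v\<close> by simp
  ultimately show "0 < (c - 1) * u + int m * v"
    by linarith
  have \<delta>p: "pair (\<lambda>j. of_int u * \<beta> j + of_int v * \<gamma> j) p = of_int (u - int m * v)"
    unfolding pair_lincomb using assms(3,4) by simp
  have "(\<lambda>j. pair \<beta> P * (of_int u * \<beta> j + of_int v * \<gamma> j)
      - pair (\<lambda>j. of_int u * \<beta> j + of_int v * \<gamma> j) p * \<beta> j)
    = (\<lambda>j. of_int (c * v) * \<gamma> j + of_int ((c - 1) * u + int m * v) * \<beta> j)"
    unfolding \<delta>p \<open>pair \<beta> P = of_int c\<close> by (simp add: algebra_simps fun_eq_iff)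
  then show "Delta (\<lambda>j. p j + P j)
      (\<lambda>j. of_int (c * v) * \<gamma> j + of_int ((c - 1) * u + int m * v) * \<beta> j) \<in> lie_gen S"
    using Delta_bracket_in_lie_gen[OF A X] by simp
qed

lemma Delta_alternating_brackets:
  fixes \<beta> \<gamma> :: "'n::finite \<Rightarrow> 'k::field_char_0"
  assumes A: "Delta p \<beta> \<in> lie_gen S" and B: "Delta q \<gamma> \<in> lie_gen S"
    and \<beta>p: "pair \<beta> p = 1" and \<beta>q: "pair \<beta> q = - of_nat m"
    and \<gamma>q: "pair \<gamma> q = 1" and \<gamma>p: "pair \<gamma> p = - of_nat m'"
    and "m \<ge> 1" and "m' \<ge> 1"
  shows "\<exists>u v :: int. u \<le> 0 \<and> 0 < v \<and>
    Delta (\<lambda>j. k * p j + (k + 1) * q j) (\<lambda>j. of_int u * \<beta> j + of_int v * \<gamma> j) \<in> lie_gen S"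
proof (induction k)
  case 0
  show ?case
    using B by (intro exI[of _ 0] exI[of _ 1]) simp
next
  case (Suc k)
  let ?P = "\<lambda>j. k * p j + (k + 1) * q j"
  obtain u v :: int where "u \<le> 0" "0 < v"
    and "Delta ?P (\<lambda>j. of_int u * \<beta> j + of_int v * \<gamma> j) \<in> lie_gen S"
    using Suc.IH by blast
  moreover have "pair \<beta> ?P = of_int (int k - int (k + 1) * int m)"
    unfolding pair_degree_lincomb \<beta>p \<beta>q by simp
  moreover have "int k - int (k + 1) * int m \<le> 0"
  proof -
    have "int (k + 1) \<le> int (k + 1) * int m"
      using \<open>m \<ge> 1\<close> by (simp add: mult_le_cancel_left1)
    then show ?thesis by linarith
  qed
  ultimately obtain u1 v1 :: int where "u1 \<le> 0" "0 < v1"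
    and "Delta (\<lambda>j. p j + ?P j) (\<lambda>j. of_int u1 * \<gamma> j + of_int v1 * \<beta> j) \<in> lie_gen S"
    using Delta_bracket_sign_pattern[OF A _ \<beta>p \<gamma>p \<open>m' \<ge> 1\<close>] by blast
  moreover have "pair \<gamma> (\<lambda>j. p j + ?P j) = of_int (int (k + 1) - int (k + 1) * int m')"
    unfolding pair_add_degree[of \<gamma> p] pair_degree_lincomb \<gamma>p \<gamma>q by (simp add: algebra_simps)
  moreover have "int (k + 1) - int (k + 1) * int m' \<le> 0"
    using \<open>m' \<ge> 1\<close> by (simp add: mult_le_cancel_left1)
  ultimately obtain u2 v2 :: int where "u2 \<le> 0" "0 < v2"
    and "Delta (\<lambda>j. q j + (p j + ?P j)) (\<lambda>j. of_int u2 * \<beta> j + of_int v2 * \<gamma> j) \<in> lie_gen S"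
    using Delta_bracket_sign_pattern[OF B _ \<gamma>q \<beta>q \<open>m \<ge> 1\<close>] by blast
  moreover have "(\<lambda>j. q j + (p j + ?P j)) = (\<lambda>j. Suc k * p j + (Suc k + 1) * q j)"
    by (simp add: algebra_simps)
  ultimately show ?case
    by auto
qed

definition Delta_edges ::
  "(('n::finite, 'k::field) mpoly \<Rightarrow> ('n, 'k) mpoly) set
    \<Rightarrow> ((('n \<Rightarrow> nat) \<times> ('n \<Rightarrow> 'k)) \<times> (('n \<Rightarrow> nat) \<times> ('n \<Rightarrow> 'k))) set" where
  "Delta_edges L = {((P, \<delta>), (Q, \<epsilon>)). Delta P \<delta> \<in> L \<and> Delta Q \<epsilon> \<in> L
      \<and> \<not> proportional \<delta> \<epsilon> \<and> pair \<delta> Q \<noteq> 0}"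

lemma Delta_edges_no_two_cycle:
  fixes S :: "(('n::finite, 'k::field_char_0) mpoly \<Rightarrow> ('n, 'k) mpoly) set"
  assumes fin: "fin_dim_ops (lie_gen S)"
    and "(x, y) \<in> Delta_edges (lie_gen S)" and "(y, x) \<in> Delta_edges (lie_gen S)"
  shows False
proof -
  obtain p \<beta> q \<gamma> where "x = (p, \<beta>)" "y = (q, \<gamma>)"
    by fastforce
  with assms have A: "Delta p \<beta> \<in> lie_gen S" and B: "Delta q \<gamma> \<in> lie_gen S"
    and "\<not> proportional \<beta> \<gamma>" and "pair \<beta> q \<noteq> 0" and "pair \<gamma> p \<noteq> 0"
    by (auto simp: Delta_edges_def)
  have "p \<noteq> (\<lambda>_. 0)" and "q \<noteq> (\<lambda>_. 0)"
    using \<open>pair \<beta> q \<noteq> 0\<close> \<open>pair \<gamma> p \<noteq> 0\<close> by (auto simp: pair_zero_degree)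
  obtain s :: nat where s: "pair \<beta> q + of_nat s * pair \<beta> p = 0"
    using Delta_chain_root[OF fin A B \<open>p \<noteq> (\<lambda>_. 0)\<close> \<open>\<not> proportional \<beta> \<gamma>\<close>] .
  obtain t :: nat where t: "pair \<gamma> p + of_nat t * pair \<gamma> q = 0"
    using Delta_chain_root[OF fin B A \<open>q \<noteq> (\<lambda>_. 0)\<close>] \<open>\<not> proportional \<beta> \<gamma>\<close>
    by (auto simp: proportional_commute)
  have "s \<ge> 1" and "pair \<beta> p \<noteq> 0"
    using s \<open>pair \<beta> q \<noteq> 0\<close> by (cases s; auto)+
  have "t \<ge> 1" and "pair \<gamma> q \<noteq> 0"
    using t \<open>pair \<gamma> p \<noteq> 0\<close> by (cases t; auto)+
  define \<beta>' where "\<beta>' = (\<lambda>j. inverse (pair \<beta> p) * \<beta> j)"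
  define \<gamma>' where "\<gamma>' = (\<lambda>j. inverse (pair \<gamma> q) * \<gamma> j)"
  have "pair \<beta>' p = 1" and "pair \<beta>' q = - of_nat s"
    unfolding \<beta>'_def pair_scale using s \<open>pair \<beta> p \<noteq> 0\<close> by (auto simp: field_simps eq_neg_iff_add_eq_0)
  moreover have "pair \<gamma>' q = 1" and "pair \<gamma>' p = - of_nat t"
    unfolding \<gamma>'_def pair_scale using t \<open>pair \<gamma> q \<noteq> 0\<close> by (auto simp: field_simps eq_neg_iff_add_eq_0)
  moreover have "Delta p \<beta>' \<in> lie_gen S" and "Delta q \<gamma>' \<in> lie_gen S"
    unfolding \<beta>'_def \<gamma>'_def using A B by (auto intro: Delta_scale_in_lie_gen)
  ultimately have alternating: "\<exists>u v :: int. u \<le> 0 \<and> 0 < v \<and>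
      Delta (\<lambda>j. k * p j + (k + 1) * q j) (\<lambda>j. of_int u * \<beta>' j + of_int v * \<gamma>' j) \<in> lie_gen S"
    for k
    using Delta_alternating_brackets \<open>s \<ge> 1\<close> \<open>t \<ge> 1\<close> by blast
  show False
  proof (rule fin_dim_no_Delta_ray[OF fin])
    show "(\<lambda>j. p j + q j) \<noteq> (\<lambda>_. 0)"
      using \<open>p \<noteq> (\<lambda>_. 0)\<close> by (auto simp: fun_eq_iff)
    fix k :: nat
    obtain u v :: int where "0 < v"
      and X: "Delta (\<lambda>j. k * p j + (k + 1) * q j) (\<lambda>j. of_int u * \<beta>' j + of_int v * \<gamma>' j) \<in> lie_gen S"
      using alternating by blast
    have "(\<lambda>j. of_int u * \<beta>' j + of_int v * \<gamma>' j) \<noteq> (\<lambda>_. 0)"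
    proof -
      have "(\<lambda>j. (of_int u * inverse (pair \<beta> p)) * \<beta> j + (of_int v * inverse (pair \<gamma> q)) * \<gamma> j)
          \<noteq> (\<lambda>_. 0)"
        using \<open>0 < v\<close> \<open>pair \<gamma> q \<noteq> 0\<close>
        by (intro lincomb_nonzero_if_not_proportional \<open>\<not> proportional \<beta> \<gamma>\<close>) simp
      then show ?thesis
        by (simp add: \<beta>'_def \<gamma>'_def mult.assoc)
    qed
    moreover have "(\<lambda>j. k * p j + (k + 1) * q j) = (\<lambda>j. q j + k * (p j + q j))"
      by (simp add: algebra_simps)
    ultimately show "\<exists>\<delta>. \<delta> \<noteq> (\<lambda>_. 0) \<and> Delta (\<lambda>j. q j + k * (p j + q j)) \<delta> \<in> lie_gen S"
      using X by auto
  qed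
qed

lemma Delta_edges_shortcut:
  fixes S :: "(('n::finite, 'k::field) mpoly \<Rightarrow> ('n, 'k) mpoly) set"
  assumes xy: "(x, y) \<in> Delta_edges (lie_gen S)" and wx: "(w, x) \<in> Delta_edges (lie_gen S)"
    and yx: "(y, x) \<notin> Delta_edges (lie_gen S)" and yz: "(y, z) \<in> Delta_edges (lie_gen S)"
  shows "\<exists>y'. (w, y') \<in> Delta_edges (lie_gen S) \<and> (y', z) \<in> Delta_edges (lie_gen S)"
proof -
  obtain P \<delta> Q \<epsilon> R \<eta> where vertices: "x = (P, \<delta>)" "y = (Q, \<epsilon>)" "w = (R, \<eta>)"
    by (metis prod.exhaust)
  from xy wx have "Delta P \<delta> \<in> lie_gen S" "Delta Q \<epsilon> \<in> lie_gen S" "Delta R \<eta> \<in> lie_gen S"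
    and "\<not> proportional \<delta> \<epsilon>" "pair \<delta> Q \<noteq> 0" "pair \<eta> P \<noteq> 0"
    by (auto simp: Delta_edges_def vertices)
  with yx have "pair \<epsilon> P = 0"
    by (auto simp: Delta_edges_def vertices proportional_commute)
  have "\<epsilon> \<noteq> (\<lambda>_. 0)"
    using nonzero_if_not_proportional[OF \<open>\<not> proportional \<delta> \<epsilon>\<close>] .
  then have "\<not> proportional \<eta> \<epsilon>"
    using not_proportional_if_pair \<open>pair \<eta> P \<noteq> 0\<close> \<open>pair \<epsilon> P = 0\<close> by blast
  have "Delta (\<lambda>j. P j + Q j) (\<lambda>j. pair \<delta> Q * \<epsilon> j - pair \<epsilon> P * \<delta> j) \<in> lie_gen S"
    using Delta_bracket_in_lie_gen \<open>Delta P \<delta> \<in> lie_gen S\<close> \<open>Delta Q \<epsilon> \<in> lie_gen S\<close> by blast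
  then have "Delta (\<lambda>j. P j + Q j) (\<lambda>j. inverse (pair \<delta> Q) * (pair \<delta> Q * \<epsilon> j)) \<in> lie_gen S"
    using \<open>pair \<epsilon> P = 0\<close> Delta_scale_in_lie_gen by fastforce
  then have merged: "Delta (\<lambda>j. P j + Q j) \<epsilon> \<in> lie_gen S"
    using \<open>pair \<delta> Q \<noteq> 0\<close> by (simp add: mult.assoc[symmetric])
  consider "pair \<eta> (\<lambda>j. P j + Q j) \<noteq> 0" | "pair \<eta> Q \<noteq> 0"
    using \<open>pair \<eta> P \<noteq> 0\<close> by (force simp: pair_add_degree)
  then show ?thesis
  proof cases
    case 1
    have "(w, ((\<lambda>j. P j + Q j), \<epsilon>)) \<in> Delta_edges (lie_gen S)"
      using 1 merged \<open>Delta R \<eta> \<in> lie_gen S\<close> \<open>\<not> proportional \<eta> \<epsilon>\<close>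
      by (simp add: Delta_edges_def vertices)
    moreover have "(((\<lambda>j. P j + Q j), \<epsilon>), z) \<in> Delta_edges (lie_gen S)"
      using yz merged by (auto simp: Delta_edges_def vertices)
    ultimately show ?thesis by blast
  next
    case 2
    then have "(w, y) \<in> Delta_edges (lie_gen S)"
      using \<open>Delta R \<eta> \<in> lie_gen S\<close> \<open>Delta Q \<epsilon> \<in> lie_gen S\<close> \<open>\<not> proportional \<eta> \<epsilon>\<close>
      by (simp add: Delta_edges_def vertices)
    with yz show ?thesis by blast
  qed
qed

lemma Delta_edges_acyclic:
  fixes S :: "(('n::finite, 'k::field_char_0) mpoly \<Rightarrow> ('n, 'k) mpoly) set"
  assumes fin: "fin_dim_ops (lie_gen S)"
  shows "acyclic (Delta_edges (lie_gen S))"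
proof -
  let ?E = "Delta_edges (lie_gen S)"
  have "(x, x) \<notin> ?E ^^ Suc n" for n x
  proof (induction n arbitrary: x rule: less_induct)
    case (less n)
    show ?case
    proof
      assume "(x, x) \<in> ?E ^^ Suc n"
      then obtain y where xy: "(x, y) \<in> ?E" and "(y, x) \<in> ?E ^^ n"
        by (blast dest: relpow_Suc_D2)
      show False
      proof (cases "(y, x) \<in> ?E")
        case True
        then show False using Delta_edges_no_two_cycle[OF fin xy] by blast
      next
        case False
        with \<open>(y, x) \<in> ?E ^^ n\<close> xy obtain r where "n = Suc (Suc r)"
          by (cases n; cases "n - 1") auto
        with \<open>(y, x) \<in> ?E ^^ n\<close> obtain z w
          where yz: "(y, z) \<in> ?E" and "(z, w) \<in> ?E ^^ r" and wx: "(w, x) \<in> ?E"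
          by (metis relpow_Suc_E relpow_Suc_E2)
        obtain y' where "(w, y') \<in> ?E" and "(y', z) \<in> ?E"
          using Delta_edges_shortcut[OF xy wx False yz] by blast
        with \<open>(z, w) \<in> ?E ^^ r\<close> have "(y', y') \<in> ?E ^^ Suc (Suc r)"
          by (blast intro: relpow_Suc_I relpow_Suc_I2)
        with less.IH[of "Suc r" y'] \<open>n = Suc (Suc r)\<close> show False
          by blast
      qed
    qed
  qed
  then show ?thesis
    unfolding acyclic_def trancl_power by (metis gr0_conv_Suc)
qed

lemma acyclic_inv_image:
  assumes "acyclic r"
  shows "acyclic (inv_image r f)"
proof -
  have "(f x, f y) \<in> r\<^sup>+" if "(x, y) \<in> (inv_image r f)\<^sup>+" for x y
    using that by (induction rule: trancl_induct) (auto intro: trancl_into_trancl)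
  with assms show ?thesis
    unfolding acyclic_def by blast
qed

theorem lemma7:
  fixes k :: nat
    and p :: "nat \<Rightarrow> ('n::finite \<Rightarrow> nat)"
    and \<beta> :: "nat \<Rightarrow> ('n \<Rightarrow> 'k::field_char_0)"
  assumes "\<forall>i<k. p i \<noteq> (\<lambda>_. 0)"
    and "\<forall>i<k. \<beta> i \<noteq> (\<lambda>_. 0)"
    and "fin_dim_ops (lie_gen {Delta (p i) (\<beta> i) | i. i < k})"
  shows "\<not> (\<exists>i. (i, i) \<in> (Gamma_edges k p \<beta>)\<^sup>+)"
proof -
  let ?S = "{Delta (p i) (\<beta> i) | i. i < k}"
  have "Delta (p i) (\<beta> i) \<in> lie_gen ?S" if "i < k" for i
    using that by (blast intro: lie_gen.gen)
  then have "Gamma_edges k p \<beta> \<subseteq> inv_image (Delta_edges (lie_gen ?S)) (\<lambda>i. (p i, \<beta> i))"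
    by (auto simp: Gamma_edges_def Delta_edges_def)
  then have "acyclic (Gamma_edges k p \<beta>)"
    using acyclic_subset acyclic_inv_image Delta_edges_acyclic[OF assms(3)] by blast
  then show ?thesis
    unfolding acyclic_def by blast
qed

end
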